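(* Let $\mu$ be a stationary ergodic process on $[0,1]^{\mathbb N}$. For every $m\in\mathbb N$, \[\lim_{n,\ell\to\infty}\beta_n^{\ell}(m)=\beta(m).\]
   Context: $X_t$ is the $t$-th coordinate projection on $[0,1]^{\mathbb N}$ with product Borel $\sigma$-algebra. For $\sigma$-subalgebras $\mathfrak U,\mathfrak V$: with $\mu_\otimes$ the pushforward of $\mu$ under $\omega\mapsto(\omega,\omega)$ on $\mathfrak U\otimes\mathfrak V$ and $\mu_{\mathfrak U},\mu_{\mathfrak V}$ the restrictions of $\mu$, $\beta(\mathfrak U,\mathfrak V):=\sup_{W\in\mathfrak U\otimes\mathfrak V}|\mu_\otimes(W)-(\mu_{\mathfrak U}\times\mu_{\mathfrak V})(W)|$. The $\beta$-mixing coefficients are $\beta(m):=\sup_{j\in\mathbb N}\beta\big(\sigma(X_1,\dots,X_j),\sigma(X_t:t\ge j+m)\big)$. Dyadic cubes: $I_{\ell,i}=[i2^{-\ell},(i+1)2^{-\ell})$, $i=0,\dots,2^\ell-1$ (last interval closed); $\Delta_{k,\ell}$ the set of cubes $I_{\ell,i_1}\times\cdots\times I_{\ell,i_k}$. For $n>m$, $j\in\{1,\dots,n-m\}$, $j':=n-m-j+1$: $\beta_{n,j}^{\ell}(m):=\frac12\sum_{A\in\Delta_{j,\ell}}\sum_{B\in\Delta_{j',\ell}}|\mu((X_1,\dots,X_j)\in A,(X_{j+m},\dots,X_n)\in B)-\mu((X_1,\dots,X_j)\in A)\mu((X_{j+m},\dots,X_n)\in B)|$, and $\beta_n^{\ell}(m):=\max_{j\in\{1,\dots,n-m\}}\beta_{n,j}^{\ell}(m)$.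 The limit is the joint limit in $n$ and $\ell$. *)

theory Defs
  imports "HOL-Probability.Probability"
begin

text \<open>Coordinate k of
  an element of type nat => real stores the value of X_(k+1), so that the
  paper's indexing X_1, X_2, ... (N = {1,2,...}) is kept.\<close>

definition Omega :: "(nat \<Rightarrow> real) measure" where
  "Omega = PiM UNIV (\<lambda>_. restrict_space borel {0..1::real})"

definition X :: "nat \<Rightarrow> (nat \<Rightarrow> real) \<Rightarrow> real" where
  "X t \<omega> = \<omega> (t - 1)"

definition shift :: "(nat \<Rightarrow> real) \<Rightarrow> (nat \<Rightarrow> real)" where
  "shift \<omega> = (\<lambda>k. \<omega> (Suc k))"

definition stationary :: "(nat \<Rightarrow> real) measure \<Rightarrow> bool" where
  "stationary \<mu> \<longleftrightarrow> distr \<mu> \<mu> shift = \<mu>"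

definition ergodic :: "(nat \<Rightarrow> real) measure \<Rightarrow> bool" where
  "ergodic \<mu> \<longleftrightarrow> (\<forall>A \<in> sets \<mu>. shift -` A \<inter> space \<mu> = A \<longrightarrow> measure \<mu> A = 0 \<or> measure \<mu> A = 1)"

definition gen_sigma :: "nat set \<Rightarrow> (nat \<Rightarrow> real) set set" where
  "gen_sigma T = sigma_sets (space Omega)
     {X t -` B \<inter> space Omega | t B. t \<in> T \<and> B \<in> sets (borel :: real measure)}"

definition restr :: "'a measure \<Rightarrow> 'a set set \<Rightarrow> 'a measure" where
  "restr \<mu> U = measure_of (space \<mu>) U (emeasure \<mu>)"

definition beta_alg :: "'a measure \<Rightarrow> 'a set set \<Rightarrow> 'a set set \<Rightarrow> real" where
  "beta_alg \<mu> U V =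
     (SUP W \<in> sets (restr \<mu> U \<Otimes>\<^sub>M restr \<mu> V).
        \<bar>measure (distr \<mu> (restr \<mu> U \<Otimes>\<^sub>M restr \<mu> V) (\<lambda>\<omega>. (\<omega>, \<omega>))) W
          - measure (restr \<mu> U \<Otimes>\<^sub>M restr \<mu> V) W\<bar>)"

definition beta_mix :: "(nat \<Rightarrow> real) measure \<Rightarrow> nat \<Rightarrow> real" where
  "beta_mix \<mu> m = (SUP j \<in> {1..}. beta_alg \<mu> (gen_sigma {1..j}) (gen_sigma {j+m..}))"

definition dyadic :: "nat \<Rightarrow> nat \<Rightarrow> real set" where
  "dyadic l i = (if i = 2^l - 1 then {real i / 2^l .. (real i + 1) / 2^l}
                 else {real i / 2^l ..< (real i + 1) / 2^l})"

definition cube_idx :: "nat \<Rightarrow> nat \<Rightarrow> (nat \<Rightarrow> nat) set" where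
  "cube_idx k l = {0..<k} \<rightarrow>\<^sub>E {0..<2^l}"

definition cube_event :: "nat \<Rightarrow> nat \<Rightarrow> nat \<Rightarrow> (nat \<Rightarrow> nat) \<Rightarrow> (nat \<Rightarrow> real) set" where
  "cube_event s k l a = {\<omega> \<in> space Omega. \<forall>r < k. X (s + r) \<omega> \<in> dyadic l (a r)}"

definition beta_nlj :: "(nat \<Rightarrow> real) measure \<Rightarrow> nat \<Rightarrow> nat \<Rightarrow> nat \<Rightarrow> nat \<Rightarrow> real" where
  "beta_nlj \<mu> n l m j = (let j' = n - m - j + 1 in
     (1/2) * (\<Sum>a \<in> cube_idx j l. \<Sum>b \<in> cube_idx j' l.
        \<bar>measure \<mu> (cube_event 1 j l a \<inter> cube_event (j + m) j' l b)
          - measure \<mu> (cube_event 1 j l a) * measure \<mu> (cube_event (j + m) j' l b)\<bar>))"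

definition beta_nl :: "(nat \<Rightarrow> real) measure \<Rightarrow> nat \<Rightarrow> nat \<Rightarrow> nat \<Rightarrow> real" where
  "beta_nl \<mu> n l m = Max ((\<lambda>j. beta_nlj \<mu> n l m j) ` {1..n - m})"

end

(*
  Fix the split point j and write nu = mu_diag - mu_past x mu_future for the difference
  of the two probability measures on the product of the past and future sigma-algebras, so
  that beta(U_j, V_j) is the supremum of |nu W|.  The products of a level-l dyadic cube event
  of (X_1, ..., X_j) with one of (X_(j+m), ..., X_n) form a finite partition of the product
  space, and beta_(n,j)^l is half the l1-norm of nu on it.  As nu has total mass 0, this is
  the largest value of nu on a union of cells and dominates |nu W| for every such union; in
  particular beta_(n,j)^l <= beta(U_j, V_j).  Unions of cells of all levels form an algebra
  generating the product sigma-algebra, so every measurable W is approximated by such unions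
  in both measures at once, whence beta_(n,j)^l -> beta(U_j, V_j).  Since beta_n^l is the
  maximum over j <= n - m and beta(m) the supremum over j, the theorem follows.
*)
theory Submission
  imports Defs
begin

section \<open>Dyadic intervals\<close>

lemma dyadic_bounds:
  assumes "x \<in> dyadic l i"
  shows "real i / 2^l \<le> x" "x \<le> (real i + 1) / 2^l"
  using assms by (auto simp: dyadic_def split: if_splits)

lemma dyadic_borel: "dyadic l i \<in> sets borel"
  by (simp add: dyadic_def)

lemma dyadic_upper_strict:
  assumes "x \<in> dyadic l i" "i + 1 < 2^l"
  shows "x < (real i + 1) / 2^l"
  using assms by (auto simp: dyadic_def split: if_splits)

lemma dyadic_unique:
  assumes "i < 2^l" "i' < 2^l" "x \<in> dyadic l i" "x \<in> dyadic l i'"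
  shows "i = i'"
proof -
  have False if "a < b" "b < 2^l" "x \<in> dyadic l a" "x \<in> dyadic l b" for a b
  proof -
    have "x < (real a + 1) / 2^l"
      using that by (intro dyadic_upper_strict) auto
    moreover have "(real a + 1) / 2^l \<le> real b / 2^l"
      using that by (simp add: divide_right_mono)
    ultimately show False
      using dyadic_bounds(1)[OF that(4)] by linarith
  qed
  then show ?thesis
    using assms by (metis linorder_neqE_nat)
qed

lemma ex_dyadic:
  assumes "0 \<le> x" "x \<le> (1::real)"
  obtains i where "i < 2^l" "x \<in> dyadic l i"
proof (cases "x = 1")
  case True
  then have "x \<in> dyadic l (2^l - 1)"
    by (auto simp: dyadic_def of_nat_diff)
  moreover have "2^l - 1 < (2::nat)^l"
    by simp
  ultimately show ?thesis
    using that by blast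
next
  case False
  define i where "i = nat \<lfloor>x * 2^l\<rfloor>"
  have i: "real i = of_int \<lfloor>x * 2^l\<rfloor>"
    using assms by (simp add: i_def)
  have "x * 2^l < 2^l"
    using False assms by simp
  then have "real i < 2^l"
    using i by linarith
  then have "i < 2^l"
    by (metis of_nat_less_iff of_nat_numeral of_nat_power)
  moreover have "x \<in> dyadic l i"
    using i assms by (auto simp: dyadic_def divide_le_eq less_divide_eq)
  ultimately show ?thesis
    using that by blast
qed

lemma dyadic_ancestor_endpoints:
  fixes i d l :: nat
  shows "real (i div 2^d) / 2^l \<le> real i / 2^(l + d)"
    and "(real i + 1) / 2^(l + d) \<le> (real (i div 2^d) + 1) / 2^l"
    and "i + 1 \<le> (i div 2^d + 1) * 2^d"
proof -
  define q where "q = i div 2^d"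
  have "i = q * 2^d + i mod 2^d"
    unfolding q_def by (rule div_mult_mod_eq[symmetric])
  moreover have "i mod 2^d < 2^d" "(q + 1) * 2^d = q * 2^d + 2^d"
    by simp_all
  ultimately have lower: "q * 2^d \<le> i" and upper: "i + 1 \<le> (q + 1) * 2^d"
    by linarith+
  then show "i + 1 \<le> (i div 2^d + 1) * 2^d"
    by (simp add: q_def)
  have scale: "x / 2^(l + d) = x / 2^d / 2^l" for x :: real
    by (simp add: power_add)
  have "real q * 2^d \<le> real i" "real i + 1 \<le> (real q + 1) * 2^d"
    using lower upper
    by (simp_all add: of_nat_le_iff[symmetric, where 'a=real] algebra_simps)
  then show "real (i div 2^d) / 2^l \<le> real i / 2^(l + d)"
    "(real i + 1) / 2^(l + d) \<le> (real (i div 2^d) + 1) / 2^l"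
    unfolding scale q_def[symmetric]
    by (simp_all add: pos_le_divide_eq pos_divide_le_eq divide_right_mono)
qed

lemma dyadic_subset_ancestor:
  assumes "l \<le> l'" "i < 2^l'"
  shows "dyadic l' i \<subseteq> dyadic l (i div 2^(l'-l))" "i div 2^(l'-l) < 2^l"
proof -
  define d where "d = l' - l"
  define q where "q = i div 2^d"
  have l': "l' = l + d"
    using assms d_def by simp
  note endpoints = dyadic_ancestor_endpoints(1,2)[where i=i and d=d and l=l, folded q_def l']
    dyadic_ancestor_endpoints(3)[of i d, folded q_def]
  have "q * 2^d \<le> i"
    unfolding q_def by (rule div_times_less_eq_dividend)
  moreover have "i < 2^l * 2^d"
    using assms(2) l' by (simp add: power_add)
  ultimately have "q * 2^d < 2^l * 2^d"
    by linarith
  then show q_less: "i div 2^(l'-l) < 2^l"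
    by (simp add: q_def d_def)
  show "dyadic l' i \<subseteq> dyadic l (i div 2^(l'-l))"
  proof
    fix y assume y: "y \<in> dyadic l' i"
    have "y < (real q + 1) / 2^l" if "q + 1 < 2^l"
    proof -
      have "(q + 1) * 2^d < 2^l * 2^d"
        using that by (intro mult_strict_right_mono) auto
      then have "i + 1 < 2^l'"
        using endpoints(3) l' by (simp add: power_add)
      then show ?thesis
        using dyadic_upper_strict[OF y] endpoints(2) by linarith
    qed
    moreover have "real q / 2^l \<le> y" "y \<le> (real q + 1) / 2^l"
      using dyadic_bounds[OF y] endpoints(1,2) by linarith+
    ultimately have "y \<in> dyadic l q"
      using q_less unfolding dyadic_def q_def d_def by auto
    then show "y \<in> dyadic l (i div 2^(l'-l))"
      by (simp add: q_def d_def)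
  qed
qed

lemma le_iff_dyadic:
  assumes "0 \<le> x" "x \<le> (1::real)"
  shows "x \<le> a \<longleftrightarrow> (\<forall>l. \<exists>i<2^l. real i / 2^l \<le> a \<and> x \<in> dyadic l i)"
proof
  assume "x \<le> a"
  then show "\<forall>l. \<exists>i<2^l. real i / 2^l \<le> a \<and> x \<in> dyadic l i"
    using assms by (metis ex_dyadic dyadic_bounds(1) order.trans)
next
  assume approx: "\<forall>l. \<exists>i<2^l. real i / 2^l \<le> a \<and> x \<in> dyadic l i"
  show "x \<le> a"
  proof (rule ccontr)
    assume "\<not> x \<le> a"
    then obtain l where l: "(1/2::real)^l < x - a"
      using real_arch_pow_inv[of "x - a" "1/2"] by auto
    obtain i where "real i / 2^l \<le> a" "x \<in> dyadic l i"
      using approx by blast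
    moreover have "(real i + 1) / 2^l = real i / 2^l + (1/2)^l"
      by (simp add: add_divide_distrib power_one_over)
    ultimately show False
      using dyadic_bounds(2) l by fastforce
  qed
qed

section \<open>Coordinate \<sigma>-algebras and cube events\<close>

lemma space_Omega: "space Omega = {\<omega>. \<forall>k. \<omega> k \<in> {0..1}}"
  by (auto simp: Omega_def space_PiM space_restrict_space PiE_def Pi_def)

lemma X_bounds: "\<omega> \<in> space Omega \<Longrightarrow> 0 \<le> X t \<omega> \<and> X t \<omega> \<le> 1"
  by (auto simp: space_Omega X_def)

lemma gen_sigma_generators_Pow:
  "{X t -` B \<inter> space Omega | t B. t \<in> T \<and> B \<in> sets (borel :: real measure)} \<subseteq> Pow (space Omega)"
  by auto

lemma sigma_algebra_gen_sigma: "sigma_algebra (space Omega) (gen_sigma T)"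
  unfolding gen_sigma_def by (rule sigma_algebra_sigma_sets[OF gen_sigma_generators_Pow])

lemma measurable_X: "X t \<in> Omega \<rightarrow>\<^sub>M borel"
proof -
  have "(\<lambda>\<omega>. \<omega> (t - 1)) \<in> Omega \<rightarrow>\<^sub>M restrict_space borel {0..1::real}"
    unfolding Omega_def by (rule measurable_component_singleton) simp
  then show ?thesis
    unfolding X_def[abs_def] using measurable_restrict_space2_iff by blast
qed

lemma gen_sigma_subset: "gen_sigma T \<subseteq> sets Omega"
  unfolding gen_sigma_def
  by (rule sets.sigma_sets_subset) (auto intro: measurable_sets[OF measurable_X])

lemma X_vimage_in_gen_sigma:
  "t \<in> T \<Longrightarrow> B \<in> sets borel \<Longrightarrow> X t -` B \<inter> space Omega \<in> gen_sigma T"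
  unfolding gen_sigma_def by (rule sigma_sets.Basic) blast

lemma measurable_gen_sigma:
  assumes "sets N = gen_sigma T" "space N = space Omega" "f \<in> space M \<rightarrow> space Omega"
    and "\<And>t. t \<in> T \<Longrightarrow> (\<lambda>x. X t (f x)) \<in> borel_measurable M"
  shows "f \<in> M \<rightarrow>\<^sub>M N"
proof -
  let ?G = "{X t -` B \<inter> space Omega | t B. t \<in> T \<and> B \<in> sets (borel :: real measure)}"
  have "f \<in> M \<rightarrow>\<^sub>M sigma (space Omega) ?G"
  proof (rule measurable_measure_of[OF gen_sigma_generators_Pow assms(3)])
    fix A assume "A \<in> ?G"
    then obtain t B where "t \<in> T" "B \<in> sets borel" "A = X t -` B \<inter> space Omega"
      by blast
    moreover have "f -` (X t -` B \<inter> space Omega) \<inter> space M = (\<lambda>x. X t (f x)) -` B \<inter> space M"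
      using assms(3) by auto
    ultimately show "f -` A \<inter> space M \<in> sets M"
      using assms(4) measurable_sets by metis
  qed
  moreover have "sets (sigma (space Omega) ?G) = sets N"
    using assms(1) gen_sigma_generators_Pow by (simp add: gen_sigma_def)
  ultimately show ?thesis
    using measurable_cong_sets by blast
qed

lemma finite_cube_idx: "finite (cube_idx k l)"
  by (auto simp: cube_idx_def intro!: finite_PiE)

lemma cube_event_subset_space: "cube_event s k l a \<subseteq> space Omega"
  by (auto simp: cube_event_def)

lemma cube_event_in_gen_sigma:
  assumes "{s..<s + k} \<subseteq> T"
  shows "cube_event s k l a \<in> gen_sigma T"
  using assms
proof (induction k)
  case 0
  have "cube_event s 0 l a = space Omega"
    by (auto simp: cube_event_def)
  then show ?case
    unfolding gen_sigma_def by (simp add: sigma_sets_top)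
next
  case (Suc k)
  interpret sigma_algebra "space Omega" "gen_sigma T"
    by (rule sigma_algebra_gen_sigma)
  have "cube_event s k l a \<in> gen_sigma T"
    using Suc by force
  moreover have "X (s + k) -` dyadic l (a k) \<inter> space Omega \<in> gen_sigma T"
    using Suc.prems dyadic_borel by (intro X_vimage_in_gen_sigma) auto
  ultimately have "cube_event s k l a \<inter> (X (s + k) -` dyadic l (a k) \<inter> space Omega) \<in> gen_sigma T"
    by (rule Int)
  moreover have "cube_event s (Suc k) l a
      = cube_event s k l a \<inter> (X (s + k) -` dyadic l (a k) \<inter> space Omega)"
    by (auto simp: cube_event_def less_Suc_eq)
  ultimately show ?case
    by simp
qed

lemma mem_cube_event_dyadic_iff:
  assumes "\<omega> \<in> cube_event s k l a" "a \<in> cube_idx k l" "r < k" "i < 2^l"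
  shows "X (s + r) \<omega> \<in> dyadic l i \<longleftrightarrow> i = a r"
proof -
  have "a r < 2^l" "X (s + r) \<omega> \<in> dyadic l (a r)"
    using assms(1-3) by (auto simp: cube_event_def cube_idx_def)
  then show ?thesis
    using dyadic_unique[OF assms(4)] by blast
qed

lemma ex_cube_event:
  assumes "\<omega> \<in> space Omega"
  obtains a where "a \<in> cube_idx k l" "\<omega> \<in> cube_event s k l a"
proof -
  have "\<forall>r. \<exists>i<2^l. X (s + r) \<omega> \<in> dyadic l i"
    using ex_dyadic X_bounds[OF assms] by metis
  then obtain f where f: "\<And>r. f r < 2^l \<and> X (s + r) \<omega> \<in> dyadic l (f r)"
    by metis
  show ?thesis
    using f assms by (intro that[of "restrict f {0..<k}"]) (auto simp: cube_idx_def cube_event_def)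
qed

lemma cube_event_disjoint:
  assumes "a \<in> cube_idx k l" "a' \<in> cube_idx k l" "a \<noteq> a'"
  shows "cube_event s k l a \<inter> cube_event s k l a' = {}"
proof -
  obtain r where "a r \<noteq> a' r"
    using assms(3) by blast
  then have "r < k"
    using assms(1,2) unfolding cube_idx_def by (metis PiE_arb atLeastLessThan_iff zero_le)
  then have "a' r < 2^l"
    using assms(2) by (auto simp: cube_idx_def)
  have False if "\<omega> \<in> cube_event s k l a" "\<omega> \<in> cube_event s k l a'" for \<omega>
  proof -
    have "X (s + r) \<omega> \<in> dyadic l (a' r)"
      using mem_cube_event_dyadic_iff[OF that(2) assms(2) \<open>r < k\<close> \<open>a' r < 2^l\<close>] by simp
    then show False
      using mem_cube_event_dyadic_iff[OF that(1) assms(1) \<open>r < k\<close> \<open>a' r < 2^l\<close>] \<open>a r \<noteq> a' r\<close>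
      by simp
  qed
  then show ?thesis
    by blast
qed

lemma cube_event_subset_ancestor:
  assumes "k \<le> k'" "l \<le> l'" "a' \<in> cube_idx k' l'"
  obtains a where "a \<in> cube_idx k l" "cube_event s k' l' a' \<subseteq> cube_event s k l a"
proof
  let ?a = "restrict (\<lambda>r. a' r div 2^(l'-l)) {0..<k}"
  have a': "a' r < 2^l'" if "r < k'" for r
    using assms(3) that by (auto simp: cube_idx_def)
  show "?a \<in> cube_idx k l"
    using dyadic_subset_ancestor(2)[OF assms(2) a'] assms(1) by (auto simp: cube_idx_def)
  show "cube_event s k' l' a' \<subseteq> cube_event s k l ?a"
  proof
    fix \<omega> assume "\<omega> \<in> cube_event s k' l' a'"
    have "X (s + r) \<omega> \<in> dyadic l (?a r)" if "r < k" for r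
    proof -
      have "r < k'"
        using that assms(1) by simp
      then have "X (s + r) \<omega> \<in> dyadic l' (a' r)"
        using \<open>\<omega> \<in> cube_event s k' l' a'\<close> by (simp add: cube_event_def)
      then show ?thesis
        using dyadic_subset_ancestor(1)[OF assms(2) a'[OF \<open>r < k'\<close>]] that by auto
    qed
    then show "\<omega> \<in> cube_event s k l ?a"
      using \<open>\<omega> \<in> cube_event s k' l' a'\<close> by (simp add: cube_event_def)
  qed
qed

section \<open>Approximation by a generating algebra\<close>

lemma (in finite_measure) abs_measure_diff_le_measure_sym_diff:
  assumes "A \<in> sets M" "B \<in> sets M"
  shows "\<bar>measure M A - measure M B\<bar> \<le> measure M (sym_diff A B)"
proof -
  have "measure M A \<le> measure M (B \<union> sym_diff A B)" "measure M B \<le> measure M (A \<union> sym_diff A B)"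
    using assms by (auto intro!: finite_measure_mono)
  moreover have "measure M (B \<union> sym_diff A B) \<le> measure M B + measure M (sym_diff A B)"
    "measure M (A \<union> sym_diff A B) \<le> measure M A + measure M (sym_diff A B)"
    using assms by (auto intro!: measure_Un_le)
  ultimately show ?thesis
    by linarith
qed

lemma (in finite_measure) measure_tail_tendsto_0:
  assumes "range A \<subseteq> sets M"
  shows "(\<lambda>n. measure M ((\<Union>i. A i) - (\<Union>i<n. A i))) \<longlonglongrightarrow> 0"
proof -
  have "(\<lambda>n. measure M ((\<Union>i. A i) - (\<Union>i<n. A i))) \<longlonglongrightarrow> measure M (\<Inter>n. (\<Union>i. A i) - (\<Union>i<n. A i))"
    using assms by (intro finite_Lim_measure_decseq) (auto simp: decseq_def)
  moreover have "(\<Inter>n. (\<Union>i. A i) - (\<Union>i<n. A i)) = {}"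
    by (auto simp: lessThan_def)
  ultimately show ?thesis
    by (metis measure_empty)
qed

lemma (in finite_measure) measure_sym_diff_UN_less:
  fixes A B :: "nat \<Rightarrow> 'a set"
  assumes "range A \<subseteq> sets M" "range B \<subseteq> sets M"
    and tail: "measure M ((\<Union>i. A i) - (\<Union>i<n. A i)) < e / 2"
    and close: "\<And>i. measure M (sym_diff (A i) (B i)) < e / (2 * (real n + 1))"
  shows "measure M (sym_diff (\<Union>i. A i) (\<Union>i<n. B i)) < e"
proof -
  have tail_sets: "(\<Union>i. A i) - (\<Union>i<n. A i) \<in> sets M"
    and diffs_sets: "(\<Union>i<n. sym_diff (A i) (B i)) \<in> sets M"
    using assms by (intro sets.Diff sets.Un sets.countable_UN; auto)+
  have "sym_diff (\<Union>i. A i) (\<Union>i<n. B i) \<subseteq> ((\<Union>i. A i) - (\<Union>i<n. A i)) \<union> (\<Union>i<n. sym_diff (A i) (B i))"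
    by blast
  then have "measure M (sym_diff (\<Union>i. A i) (\<Union>i<n. B i))
      \<le> measure M (((\<Union>i. A i) - (\<Union>i<n. A i)) \<union> (\<Union>i<n. sym_diff (A i) (B i)))"
    using tail_sets diffs_sets by (intro finite_measure_mono sets.Un)
  also have "\<dots> \<le> measure M ((\<Union>i. A i) - (\<Union>i<n. A i)) + measure M (\<Union>i<n. sym_diff (A i) (B i))"
    using tail_sets diffs_sets by (rule measure_Un_le)
  also have "measure M (\<Union>i<n. sym_diff (A i) (B i)) \<le> (\<Sum>i<n. measure M (sym_diff (A i) (B i)))"
    using assms by (intro measure_UNION_le) auto
  also have "\<dots> \<le> real n * (e / (2 * (real n + 1)))"
    using sum_mono[of "{..<n}" _ "\<lambda>_. e / (2 * (real n + 1))"] close by (simp add: less_imp_le)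
  also have "\<dots> \<le> e / 2"
  proof -
    have "0 \<le> e"
      using tail measure_nonneg[of M "(\<Union>i. A i) - (\<Union>i<n. A i)"] by linarith
    then show ?thesis
      by (simp add: field_simps)
  qed
  finally show ?thesis
    using tail by simp
qed

definition approx_in :: "'a measure \<Rightarrow> 'a measure \<Rightarrow> 'a set set \<Rightarrow> 'a set \<Rightarrow> bool" where
  "approx_in M N A W \<longleftrightarrow>
    (\<forall>e>0. \<exists>W'\<in>A. measure M (sym_diff W W') < e \<and> measure N (sym_diff W W') < e)"

lemma approx_in_Diff:
  assumes "algebra \<Omega> A" "W \<subseteq> \<Omega>" "approx_in M N A W"
  shows "approx_in M N A (\<Omega> - W)"
  unfolding approx_in_def
proof (intro allI impI)
  interpret algebra \<Omega> A
    by (rule assms(1))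
  fix e :: real assume "0 < e"
  then obtain W' where "W' \<in> A" "measure M (sym_diff W W') < e" "measure N (sym_diff W W') < e"
    using assms(3) unfolding approx_in_def by blast
  moreover have "sym_diff (\<Omega> - W) (\<Omega> - W') = sym_diff W W'"
    using assms(2) sets_into_space[OF \<open>W' \<in> A\<close>] by blast
  ultimately show "\<exists>W'\<in>A. measure M (sym_diff (\<Omega> - W) W') < e \<and> measure N (sym_diff (\<Omega> - W) W') < e"
    by (metis compl_sets)
qed

lemma approx_in_UN:
  fixes W :: "nat \<Rightarrow> 'a set"
  assumes M: "finite_measure M" and N: "finite_measure N" and sets_N: "sets N = sets M"
    and A: "algebra (space M) A" "A \<subseteq> sets M" and W: "range W \<subseteq> sets M"
    and approx: "\<And>i. approx_in M N A (W i)"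
  shows "approx_in M N A (\<Union>i. W i)"
  unfolding approx_in_def
proof (intro allI impI)
  interpret A: algebra "space M" A
    by (rule A(1))
  interpret M: finite_measure M
    by (rule M)
  interpret N: finite_measure N
    by (rule N)
  fix e :: real assume "0 < e"
  have W_N: "range W \<subseteq> sets N"
    using W sets_N by simp
  have "\<forall>\<^sub>F n in sequentially. measure M ((\<Union>i. W i) - (\<Union>i<n. W i)) < e / 2
      \<and> measure N ((\<Union>i. W i) - (\<Union>i<n. W i)) < e / 2"
    using M.measure_tail_tendsto_0[OF W] N.measure_tail_tendsto_0[OF W_N] \<open>0 < e\<close>
    by (intro eventually_conj order_tendstoD) auto
  then obtain n where tail_M: "measure M ((\<Union>i. W i) - (\<Union>i<n. W i)) < e / 2"
    and tail_N: "measure N ((\<Union>i. W i) - (\<Union>i<n. W i)) < e / 2"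
    by (auto simp: eventually_sequentially)
  define d where "d = e / (2 * (real n + 1))"
  have "0 < d"
    using \<open>0 < e\<close> by (simp add: d_def)
  then have "\<forall>i. \<exists>B\<in>A. measure M (sym_diff (W i) B) < d \<and> measure N (sym_diff (W i) B) < d"
    using approx unfolding approx_in_def by blast
  then obtain B where B: "\<And>i. B i \<in> A"
    and B_M: "\<And>i. measure M (sym_diff (W i) (B i)) < d"
    and B_N: "\<And>i. measure N (sym_diff (W i) (B i)) < d"
    by metis
  have "range B \<subseteq> sets M" "range B \<subseteq> sets N"
    using B A(2) sets_N by auto
  then have "measure M (sym_diff (\<Union>i. W i) (\<Union>i<n. B i)) < e"
    "measure N (sym_diff (\<Union>i. W i) (\<Union>i<n. B i)) < e"
    using M.measure_sym_diff_UN_less[OF W _ tail_M] N.measure_sym_diff_UN_less[OF W_N _ tail_N]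
      B_M B_N unfolding d_def by blast+
  moreover have "(\<Union>i<n. B i) \<in> A"
    using B by blast
  ultimately show "\<exists>W'\<in>A. measure M (sym_diff (\<Union>i. W i) W') < e
      \<and> measure N (sym_diff (\<Union>i. W i) W') < e"
    by blast
qed

lemma approx_in_sigma_sets:
  assumes M: "finite_measure M" and N: "finite_measure N" and sets_N: "sets N = sets M"
    and A: "algebra (space M) A" and sets_M: "sets M = sigma_sets (space M) A"
    and W: "W \<in> sigma_sets (space M) A"
  shows "approx_in M N A W"
  using W
proof (induction W rule: sigma_sets.induct)
  case (Basic W)
  then show ?case
    unfolding approx_in_def by force
next
  case Empty
  interpret algebra "space M" A
    by (rule A)
  show ?case
    unfolding approx_in_def by force
next
  case (Compl W)
  then show ?case
    using sets_M sets.sets_into_space by (intro approx_in_Diff[OF A]) auto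
next
  case (Union W)
  then show ?case
    using sets_M by (intro approx_in_UN[OF M N sets_N A]) auto
qed

section \<open>The discrepancy between the diagonal and the product measure\<close>

lemma half_sum_abs_eq_sum_max:
  fixes d :: "'a \<Rightarrow> real"
  assumes "sum d I = 0"
  shows "(\<Sum>i\<in>I. \<bar>d i\<bar>) / 2 = (\<Sum>i\<in>I. max (d i) 0)"
proof -
  have "(\<Sum>i\<in>I. \<bar>d i\<bar>) = (\<Sum>i\<in>I. 2 * max (d i) 0 - d i)"
    by (intro sum.cong) auto
  then show ?thesis
    using assms by (simp add: sum_subtractf sum_distrib_left[symmetric])
qed

lemma sum_subset_abs_le_half_sum_abs:
  fixes d :: "'a \<Rightarrow> real"
  assumes "finite I" "S \<subseteq> I" "sum d I = 0"
  shows "\<bar>sum d S\<bar> \<le> (\<Sum>i\<in>I. \<bar>d i\<bar>) / 2"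
proof -
  have "sum d S \<le> (\<Sum>i\<in>S. max (d i) 0)"
    by (intro sum_mono) simp
  also have "\<dots> \<le> (\<Sum>i\<in>I. max (d i) 0)"
    using assms(1,2) by (intro sum_mono2) auto
  finally have "sum d S \<le> (\<Sum>i\<in>I. \<bar>d i\<bar>) / 2"
    using half_sum_abs_eq_sum_max[OF assms(3)] by simp
  moreover have "sum (\<lambda>i. - d i) I = 0"
    using assms(3) by (simp add: sum_negf)
  then have "- sum d S \<le> (\<Sum>i\<in>I. \<bar>d i\<bar>) / 2"
    using half_sum_abs_eq_sum_max[of "\<lambda>i. - d i" I] sum_mono2[OF assms(1,2), of "\<lambda>i. max (- d i) 0"]
      sum_mono[of S "\<lambda>i. - d i" "\<lambda>i. max (- d i) 0"]
    by (simp add: sum_negf)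
  ultimately show ?thesis
    by linarith
qed

lemma sum_nonneg_part_eq_half_sum_abs:
  fixes d :: "'a \<Rightarrow> real"
  assumes "finite I" "sum d I = 0"
  shows "sum d {i\<in>I. 0 \<le> d i} = (\<Sum>i\<in>I. \<bar>d i\<bar>) / 2"
proof -
  have "sum d {i\<in>I. 0 \<le> d i} = (\<Sum>i\<in>I. if 0 \<le> d i then d i else 0)"
    using sum.inter_filter[OF assms(1)] by simp
  also have "\<dots> = (\<Sum>i\<in>I. max (d i) 0)"
    by (intro sum.cong) auto
  finally show ?thesis
    using half_sum_abs_eq_sum_max[OF assms(2)] by simp
qed

lemma
  assumes "sigma_algebra (space \<mu>) U" "U \<subseteq> sets \<mu>"
  shows sets_restr: "sets (restr \<mu> U) = U"
    and space_restr: "space (restr \<mu> U) = space \<mu>"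
    and emeasure_restr: "A \<in> U \<Longrightarrow> emeasure (restr \<mu> U) A = emeasure \<mu> A"
    and prob_space_restr: "prob_space \<mu> \<Longrightarrow> prob_space (restr \<mu> U)"
proof -
  have U_Pow: "U \<subseteq> Pow (space \<mu>)"
    using assms(2) sets.sets_into_space by auto
  have sets_sigma: "sets (sigma (space \<mu>) U) = U"
    using sigma_algebra.sigma_sets_eq[OF assms(1)] U_Pow by simp
  have sub: "subalgebra \<mu> (sigma (space \<mu>) U)"
    using assms(2) U_Pow sets_sigma by (simp add: subalgebra_def)
  have eq: "restr \<mu> U = restr_to_subalg \<mu> (sigma (space \<mu>) U)"
    unfolding restr_def restr_to_subalg_def sets_sigma ..
  show "sets (restr \<mu> U) = U"
    unfolding eq sets_restr_to_subalg[OF sub] sets_sigma ..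
  show "space (restr \<mu> U) = space \<mu>"
    unfolding eq space_restr_to_subalg ..
  show "emeasure (restr \<mu> U) A = emeasure \<mu> A" if "A \<in> U"
    unfolding eq using that sets_sigma by (intro emeasure_restr_to_subalg[OF sub]) simp
  show "prob_space \<mu> \<Longrightarrow> prob_space (restr \<mu> U)"
    unfolding eq by (rule prob_space_restr_to_subalg[OF sub])
qed

locale two_subalgebras = prob_space \<mu> for \<mu> :: "'a measure" +
  fixes U V :: "'a set set"
  assumes sigma_algebra_U: "sigma_algebra (space \<mu>) U" and U_subset: "U \<subseteq> sets \<mu>"
    and sigma_algebra_V: "sigma_algebra (space \<mu>) V" and V_subset: "V \<subseteq> sets \<mu>"
begin

lemmas sets_restr_U = sets_restr[OF sigma_algebra_U U_subset]
lemmas sets_restr_V = sets_restr[OF sigma_algebra_V V_subset]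
lemmas space_restr_U = space_restr[OF sigma_algebra_U U_subset]
lemmas space_restr_V = space_restr[OF sigma_algebra_V V_subset]
lemmas emeasure_restr_U = emeasure_restr[OF sigma_algebra_U U_subset]
lemmas emeasure_restr_V = emeasure_restr[OF sigma_algebra_V V_subset]
lemmas prob_space_restr_U = prob_space_restr[OF sigma_algebra_U U_subset prob_space_axioms]
lemmas prob_space_restr_V = prob_space_restr[OF sigma_algebra_V V_subset prob_space_axioms]

definition restr_prod :: "('a \<times> 'a) measure" where
  "restr_prod = restr \<mu> U \<Otimes>\<^sub>M restr \<mu> V"

definition diag :: "('a \<times> 'a) measure" where
  "diag = distr \<mu> restr_prod (\<lambda>\<omega>. (\<omega>, \<omega>))"

definition discrepancy :: "('a \<times> 'a) set \<Rightarrow> real" where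
  "discrepancy W = measure diag W - measure restr_prod W"

lemma prob_space_restr_prod: "prob_space restr_prod"
  unfolding restr_prod_def using prob_space_restr_U prob_space_restr_V by (rule prob_space_pair)

lemma space_restr_prod: "space restr_prod = space \<mu> \<times> space \<mu>"
  unfolding restr_prod_def space_pair_measure space_restr_U space_restr_V ..

lemma measurable_diagonal: "(\<lambda>\<omega>. (\<omega>, \<omega>)) \<in> \<mu> \<rightarrow>\<^sub>M restr_prod"
proof -
  have "(\<lambda>\<omega>. \<omega>) \<in> \<mu> \<rightarrow>\<^sub>M restr \<mu> W" if "sigma_algebra (space \<mu>) W" "W \<subseteq> sets \<mu>" for W
    using that sets.sets_into_space
    by (intro measurableI) (auto simp: sets_restr space_restr Int_absorb2)
  then show ?thesis
    unfolding restr_prod_def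
    using sigma_algebra_U sigma_algebra_V U_subset V_subset by (intro measurable_Pair)
qed

lemma prob_space_diag: "prob_space diag"
  unfolding diag_def by (rule prob_space_distr[OF measurable_diagonal])

lemma sets_diag: "sets diag = sets restr_prod"
  unfolding diag_def by simp

lemma Times_in_restr_prod: "A \<in> U \<Longrightarrow> B \<in> V \<Longrightarrow> A \<times> B \<in> sets restr_prod"
  unfolding restr_prod_def using sets_restr_U sets_restr_V by (auto intro: pair_measureI)

lemma discrepancy_Times:
  assumes "A \<in> U" "B \<in> V"
  shows "discrepancy (A \<times> B) = measure \<mu> (A \<inter> B) - measure \<mu> A * measure \<mu> B"
proof -
  have "measure diag (A \<times> B) = measure \<mu> ((\<lambda>\<omega>. (\<omega>, \<omega>)) -` (A \<times> B) \<inter> space \<mu>)"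
    unfolding diag_def using Times_in_restr_prod[OF assms] measurable_diagonal
    by (rule measure_distr[rotated])
  also have "(\<lambda>\<omega>. (\<omega>, \<omega>)) -` (A \<times> B) \<inter> space \<mu> = A \<inter> B"
    using assms U_subset sets.sets_into_space by blast
  finally have diag: "measure diag (A \<times> B) = measure \<mu> (A \<inter> B)" .
  interpret V: prob_space "restr \<mu> V"
    by (rule prob_space_restr_V)
  have "emeasure restr_prod (A \<times> B) = emeasure (restr \<mu> U) A * emeasure (restr \<mu> V) B"
    unfolding restr_prod_def using assms sets_restr_U sets_restr_V
    by (intro V.emeasure_pair_measure_Times) auto
  then have "measure restr_prod (A \<times> B) = measure \<mu> A * measure \<mu> B"
    using assms by (simp add: measure_def enn2real_mult emeasure_restr_U emeasure_restr_V)
  with diag show ?thesis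
    by (simp add: discrepancy_def)
qed

lemma abs_discrepancy_le_1: "\<bar>discrepancy W\<bar> \<le> 1"
proof -
  interpret diag: prob_space diag
    by (rule prob_space_diag)
  interpret restr_prod: prob_space restr_prod
    by (rule prob_space_restr_prod)
  show ?thesis
    unfolding discrepancy_def
    using diag.prob_le_1[of W] restr_prod.prob_le_1[of W] measure_nonneg[of diag W]
      measure_nonneg[of restr_prod W]
    unfolding abs_le_iff by linarith
qed

lemma beta_alg_eq_SUP: "beta_alg \<mu> U V = (SUP W\<in>sets restr_prod. \<bar>discrepancy W\<bar>)"
  unfolding beta_alg_def discrepancy_def diag_def restr_prod_def ..

lemma abs_discrepancy_le_beta_alg: "W \<in> sets restr_prod \<Longrightarrow> \<bar>discrepancy W\<bar> \<le> beta_alg \<mu> U V"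
  unfolding beta_alg_eq_SUP using abs_discrepancy_le_1
  by (intro cSUP_upper bdd_aboveI[of _ 1]) auto

lemma less_beta_alg_imp_ex_discrepancy:
  assumes "a < beta_alg \<mu> U V"
  obtains W where "W \<in> sets restr_prod" "a < \<bar>discrepancy W\<bar>"
  using assms less_cSUP_iff[of "sets restr_prod" "\<lambda>W. \<bar>discrepancy W\<bar>"] abs_discrepancy_le_1
  unfolding beta_alg_eq_SUP by (metis bdd_aboveI2 sets.empty_sets empty_iff)

lemma beta_alg_le_1: "beta_alg \<mu> U V \<le> 1"
  unfolding beta_alg_eq_SUP using abs_discrepancy_le_1 by (intro cSUP_least) auto

lemma abs_discrepancy_diff_le:
  assumes "W \<in> sets restr_prod" "W' \<in> sets restr_prod"
  shows "\<bar>discrepancy W - discrepancy W'\<bar>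
    \<le> measure diag (sym_diff W W') + measure restr_prod (sym_diff W W')"
proof -
  have "\<bar>measure diag W - measure diag W'\<bar> \<le> measure diag (sym_diff W W')"
    using assms sets_diag prob_space.finite_measure[OF prob_space_diag]
    by (intro finite_measure.abs_measure_diff_le_measure_sym_diff) auto
  moreover have "\<bar>measure restr_prod W - measure restr_prod W'\<bar>
      \<le> measure restr_prod (sym_diff W W')"
    using assms prob_space.finite_measure[OF prob_space_restr_prod]
    by (intro finite_measure.abs_measure_diff_le_measure_sym_diff) auto
  ultimately show ?thesis
    unfolding discrepancy_def abs_le_iff by linarith
qed

definition measurable_partition :: "'i set \<Rightarrow> ('i \<Rightarrow> ('a \<times> 'a) set) \<Rightarrow> bool" where
  "measurable_partition I C \<longleftrightarrow> finite I \<and> disjoint_family_on C I \<and> C ` I \<subseteq> sets restr_prod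
     \<and> (\<Union>i\<in>I. C i) = space restr_prod"

lemma discrepancy_UN:
  assumes "measurable_partition I C" "S \<subseteq> I"
  shows "discrepancy (\<Union>i\<in>S. C i) = (\<Sum>i\<in>S. discrepancy (C i))"
proof -
  have "measure L (\<Union>i\<in>S. C i) = (\<Sum>i\<in>S. measure L (C i))"
    if "finite_measure L" "sets L = sets restr_prod" for L
    using assms that finite_subset[of S I] disjoint_family_on_mono[OF assms(2)]
    by (intro measure_finite_Union)
      (auto simp: measurable_partition_def finite_measure.emeasure_finite)
  then show ?thesis
    using prob_space.finite_measure[OF prob_space_diag]
      prob_space.finite_measure[OF prob_space_restr_prod] sets_diag
    by (simp add: discrepancy_def sum_subtractf)
qed

lemma sum_discrepancy_partition:
  assumes "measurable_partition I C"
  shows "(\<Sum>i\<in>I. discrepancy (C i)) = 0"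
proof -
  have "(\<Sum>i\<in>I. discrepancy (C i)) = discrepancy (space restr_prod)"
    using discrepancy_UN[OF assms order_refl] assms by (simp add: measurable_partition_def)
  also have "\<dots> = 0"
    using prob_space.prob_space[OF prob_space_diag] prob_space.prob_space[OF prob_space_restr_prod]
    by (simp add: discrepancy_def diag_def)
  finally show ?thesis .
qed

lemma abs_discrepancy_UN_le:
  assumes "measurable_partition I C" "S \<subseteq> I"
  shows "\<bar>discrepancy (\<Union>i\<in>S. C i)\<bar> \<le> (\<Sum>i\<in>I. \<bar>discrepancy (C i)\<bar>) / 2"
  using sum_subset_abs_le_half_sum_abs[OF _ assms(2) sum_discrepancy_partition[OF assms(1)]]
    assms by (simp add: discrepancy_UN measurable_partition_def)

lemma half_sum_abs_discrepancy_le_beta_alg: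
  assumes "measurable_partition I C"
  shows "(\<Sum>i\<in>I. \<bar>discrepancy (C i)\<bar>) / 2 \<le> beta_alg \<mu> U V"
proof -
  let ?S = "{i\<in>I. 0 \<le> discrepancy (C i)}"
  have "(\<Sum>i\<in>I. \<bar>discrepancy (C i)\<bar>) / 2 = discrepancy (\<Union>i\<in>?S. C i)"
    using sum_nonneg_part_eq_half_sum_abs[OF _ sum_discrepancy_partition[OF assms]] assms
    by (simp add: discrepancy_UN measurable_partition_def)
  also have "\<dots> \<le> \<bar>discrepancy (\<Union>i\<in>?S. C i)\<bar>"
    by (rule abs_ge_self)
  also have "\<dots> \<le> beta_alg \<mu> U V"
    using assms
    by (intro abs_discrepancy_le_beta_alg sets.finite_UN) (auto simp: measurable_partition_def)
  finally show ?thesis .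
qed

end

section \<open>Dyadic cells for a fixed split point\<close>

locale dyadic_blocks =
  fixes \<mu> :: "(nat \<Rightarrow> real) measure" and j m :: nat
  assumes prob_space_\<mu>: "prob_space \<mu>" and sets_\<mu>: "sets \<mu> = sets Omega"

context dyadic_blocks
begin

text \<open>Naming the two \<sigma>-algebras keeps the simplifier from rewriting the \<open>1\<close> in
  \<open>gen_sigma {1..j}\<close> to \<open>Suc 0\<close> inside the sublocale's terms.\<close>

definition past :: "(nat \<Rightarrow> real) set set" where
  "past = gen_sigma {1..j}"

definition future :: "(nat \<Rightarrow> real) set set" where
  "future = gen_sigma {j+m..}"

lemma space_\<mu>: "space \<mu> = space Omega"
  using sets_\<mu> sets_eq_imp_space_eq by blast

lemma beta_alg_past_future:
  "beta_alg \<mu> past future = beta_alg \<mu> (gen_sigma {1..j}) (gen_sigma {j+m..})"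
  unfolding past_def future_def ..

lemma two_subalgebras_past_future: "two_subalgebras \<mu> past future"
  using prob_space_\<mu> sets_\<mu> space_\<mu> sigma_algebra_gen_sigma gen_sigma_subset
  by (simp add: two_subalgebras_def two_subalgebras_axioms_def past_def future_def)

end

sublocale dyadic_blocks \<subseteq> two_subalgebras \<mu> past future
  by (rule two_subalgebras_past_future)

context dyadic_blocks
begin

definition block_len :: "nat \<Rightarrow> nat" where
  "block_len n = n - m - j + 1"

definition cell_idx :: "nat \<Rightarrow> nat \<Rightarrow> ((nat \<Rightarrow> nat) \<times> (nat \<Rightarrow> nat)) set" where
  "cell_idx n l = cube_idx j l \<times> cube_idx (block_len n) l"

definition cell ::
    "nat \<Rightarrow> nat \<Rightarrow> (nat \<Rightarrow> nat) \<times> (nat \<Rightarrow> nat) \<Rightarrow> ((nat \<Rightarrow> real) \<times> (nat \<Rightarrow> real)) set" where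
  "cell n l p = cube_event 1 j l (fst p) \<times> cube_event (j + m) (block_len n) l (snd p)"

lemma cube_event_in_past: "cube_event 1 j l a \<in> past"
  unfolding past_def by (rule cube_event_in_gen_sigma) auto

lemma cube_event_in_future: "cube_event (j + m) k l b \<in> future"
  unfolding future_def by (rule cube_event_in_gen_sigma) auto

lemma discrepancy_cell:
  "discrepancy (cell n l (a, b))
    = measure \<mu> (cube_event 1 j l a \<inter> cube_event (j + m) (block_len n) l b)
      - measure \<mu> (cube_event 1 j l a) * measure \<mu> (cube_event (j + m) (block_len n) l b)"
  unfolding cell_def fst_conv snd_conv
  by (rule discrepancy_Times[OF cube_event_in_past cube_event_in_future])

lemma cell_subset_space: "cell n l p \<subseteq> space Omega \<times> space Omega"
  using cube_event_subset_space unfolding cell_def by blast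

lemma measurable_partition_cells: "measurable_partition (cell_idx n l) (cell n l)"
  unfolding measurable_partition_def
proof (intro conjI)
  show "finite (cell_idx n l)"
    by (simp add: cell_idx_def finite_cube_idx)
  show "disjoint_family_on (cell n l) (cell_idx n l)"
    using cube_event_disjoint
    by (fastforce simp: disjoint_family_on_def cell_def cell_idx_def prod_eq_iff)
  show "cell n l ` cell_idx n l \<subseteq> sets restr_prod"
    unfolding cell_def
    using Times_in_restr_prod[OF cube_event_in_past cube_event_in_future] by blast
  show "(\<Union>p\<in>cell_idx n l. cell n l p) = space restr_prod"
  proof
    show "(\<Union>p\<in>cell_idx n l. cell n l p) \<subseteq> space restr_prod"
      using cell_subset_space by (simp add: space_restr_prod space_\<mu> UN_subset_iff)
    show "space restr_prod \<subseteq> (\<Union>p\<in>cell_idx n l. cell n l p)"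
    proof
      fix x assume "x \<in> space restr_prod"
      then have "fst x \<in> space Omega" "snd x \<in> space Omega"
        by (auto simp: space_restr_prod space_\<mu>)
      then obtain a b where "a \<in> cube_idx j l" "fst x \<in> cube_event 1 j l a"
        "b \<in> cube_idx (block_len n) l" "snd x \<in> cube_event (j + m) (block_len n) l b"
        by (metis ex_cube_event)
      then show "x \<in> (\<Union>p\<in>cell_idx n l. cell n l p)"
        by (intro UN_I[of "(a, b)"]) (auto simp: cell_idx_def cell_def mem_Times_iff)
    qed
  qed
qed

lemma beta_nlj_eq: "beta_nlj \<mu> n l m j = (\<Sum>p\<in>cell_idx n l. \<bar>discrepancy (cell n l p)\<bar>) / 2"
  unfolding beta_nlj_def Let_def cell_idx_def block_len_def[symmetric] sum.cartesian_product
    split_def discrepancy_cell[symmetric]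
  by simp

lemma beta_nlj_le_beta_alg: "beta_nlj \<mu> n l m j \<le> beta_alg \<mu> (gen_sigma {1..j}) (gen_sigma {j+m..})"
  unfolding beta_nlj_eq beta_alg_past_future[symmetric]
  by (rule half_sum_abs_discrepancy_le_beta_alg[OF measurable_partition_cells])

definition saturated :: "nat \<Rightarrow> nat \<Rightarrow> ((nat \<Rightarrow> real) \<times> (nat \<Rightarrow> real)) set \<Rightarrow> bool" where
  "saturated n l W \<longleftrightarrow> W \<subseteq> space Omega \<times> space Omega
     \<and> (\<forall>p\<in>cell_idx n l. cell n l p \<subseteq> W \<or> cell n l p \<inter> W = {})"

definition cell_algebra :: "((nat \<Rightarrow> real) \<times> (nat \<Rightarrow> real)) set set" where
  "cell_algebra = {W. \<exists>n l. saturated n l W}"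

lemma cell_algebra_subset_Pow: "cell_algebra \<subseteq> Pow (space Omega \<times> space Omega)"
  by (auto simp: cell_algebra_def saturated_def)

lemma saturated_eq_UN:
  assumes "saturated n l W"
  shows "W = (\<Union>p\<in>{p\<in>cell_idx n l. cell n l p \<subseteq> W}. cell n l p)"
proof
  show "W \<subseteq> (\<Union>p\<in>{p\<in>cell_idx n l. cell n l p \<subseteq> W}. cell n l p)"
  proof
    fix x assume "x \<in> W"
    then have "x \<in> space restr_prod"
      using assms by (auto simp: saturated_def space_restr_prod space_\<mu>)
    then obtain p where "p \<in> cell_idx n l" "x \<in> cell n l p"
      using measurable_partition_cells unfolding measurable_partition_def by blast
    with \<open>x \<in> W\<close> assms show "x \<in> (\<Union>p\<in>{p\<in>cell_idx n l. cell n l p \<subseteq> W}. cell n l p)"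
      unfolding saturated_def by blast
  qed
qed blast

lemma abs_discrepancy_saturated_le:
  assumes "saturated n l W"
  shows "\<bar>discrepancy W\<bar> \<le> beta_nlj \<mu> n l m j"
proof -
  have "\<bar>discrepancy (\<Union>p\<in>{p\<in>cell_idx n l. cell n l p \<subseteq> W}. cell n l p)\<bar> \<le> beta_nlj \<mu> n l m j"
    unfolding beta_nlj_eq by (rule abs_discrepancy_UN_le[OF measurable_partition_cells]) auto
  then show ?thesis
    using saturated_eq_UN[OF assms] by simp
qed

lemma saturated_in_sets: "saturated n l W \<Longrightarrow> W \<in> sets restr_prod"
  using measurable_partition_cells
  by (subst saturated_eq_UN) (auto simp: measurable_partition_def intro!: sets.finite_UN)

lemma saturated_mono:
  assumes "saturated n l W" "n \<le> n'" "l \<le> l'"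
  shows "saturated n' l' W"
  unfolding saturated_def
proof (intro conjI ballI)
  show "W \<subseteq> space Omega \<times> space Omega"
    using assms(1) by (simp add: saturated_def)
  fix p' assume "p' \<in> cell_idx n' l'"
  moreover have "block_len n \<le> block_len n'"
    using assms(2) by (simp add: block_len_def)
  ultimately obtain a b where "a \<in> cube_idx j l" "b \<in> cube_idx (block_len n) l"
    "cube_event 1 j l' (fst p') \<subseteq> cube_event 1 j l a"
    "cube_event (j + m) (block_len n') l' (snd p') \<subseteq> cube_event (j + m) (block_len n) l b"
    using assms(3) by (metis cube_event_subset_ancestor cell_idx_def mem_Times_iff order_refl)
  then have "(a, b) \<in> cell_idx n l" "cell n' l' p' \<subseteq> cell n l (a, b)"
    by (auto simp: cell_idx_def cell_def)
  then show "cell n' l' p' \<subseteq> W \<or> cell n' l' p' \<inter> W = {}"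
    using assms(1) unfolding saturated_def by blast
qed

lemma algebra_cell_algebra: "algebra (space Omega \<times> space Omega) cell_algebra"
  unfolding algebra_iff_Un
proof (intro conjI ballI)
  show "cell_algebra \<subseteq> Pow (space Omega \<times> space Omega)"
    by (rule cell_algebra_subset_Pow)
  show "{} \<in> cell_algebra"
    by (auto simp: cell_algebra_def saturated_def)
  fix W assume "W \<in> cell_algebra"
  then obtain n l where W: "saturated n l W"
    by (auto simp: cell_algebra_def)
  then have "saturated n l (space Omega \<times> space Omega - W)"
    using cell_subset_space unfolding saturated_def by blast
  then show "space Omega \<times> space Omega - W \<in> cell_algebra"
    by (auto simp: cell_algebra_def)
  fix W' assume "W' \<in> cell_algebra"
  then obtain n' l' where W': "saturated n' l' W'"
    by (auto simp: cell_algebra_def)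
  have "saturated (max n n') (max l l') W" "saturated (max n n') (max l l') W'"
    using saturated_mono W W' by (metis max.cobounded1 max.cobounded2)+
  then have "saturated (max n n') (max l l') (W \<union> W')"
    by (auto simp: saturated_def)
  then show "W \<union> W' \<in> cell_algebra"
    by (auto simp: cell_algebra_def)
qed

definition dyadic_slab ::
    "((nat \<Rightarrow> real) \<times> (nat \<Rightarrow> real) \<Rightarrow> real) \<Rightarrow> nat \<Rightarrow> (nat \<Rightarrow> bool)
      \<Rightarrow> ((nat \<Rightarrow> real) \<times> (nat \<Rightarrow> real)) set" where
  "dyadic_slab f l P = {x \<in> space Omega \<times> space Omega. \<exists>i<2^l. P i \<and> f x \<in> dyadic l i}"

lemma saturated_dyadic_slab:
  assumes "\<And>p. p \<in> cell_idx n l \<Longrightarrow> \<exists>i<2^l. \<forall>x\<in>cell n l p. f x \<in> dyadic l i"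
  shows "saturated n l (dyadic_slab f l P)"
  unfolding saturated_def
proof (intro conjI ballI)
  show "dyadic_slab f l P \<subseteq> space Omega \<times> space Omega"
    by (auto simp: dyadic_slab_def)
  fix p assume "p \<in> cell_idx n l"
  then obtain i where i: "i < 2^l" "\<forall>x\<in>cell n l p. f x \<in> dyadic l i"
    using assms by blast
  have unique: "i' = i" if "x \<in> cell n l p" "i' < 2^l" "f x \<in> dyadic l i'" for x i'
    using dyadic_unique[OF that(2) i(1) that(3)] i(2) that(1) by blast
  show "cell n l p \<subseteq> dyadic_slab f l P \<or> cell n l p \<inter> dyadic_slab f l P = {}"
  proof (cases "P i")
    case True
    then have "cell n l p \<subseteq> dyadic_slab f l P"
      using i cell_subset_space[of n l p] unfolding dyadic_slab_def by blast
    then show ?thesis ..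
  next
    case False
    then have "cell n l p \<inter> dyadic_slab f l P = {}"
      using unique unfolding dyadic_slab_def by blast
    then show ?thesis ..
  qed
qed

lemma past_slab_in_cell_algebra:
  assumes "t \<in> {1..j}"
  shows "dyadic_slab (\<lambda>x. X t (fst x)) l P \<in> cell_algebra"
proof -
  have "saturated 0 l (dyadic_slab (\<lambda>x. X t (fst x)) l P)"
  proof (rule saturated_dyadic_slab)
    fix p assume "p \<in> cell_idx 0 l"
    then have "fst p \<in> cube_idx j l"
      by (auto simp: cell_idx_def)
    moreover have r: "t - 1 < j" and t: "1 + (t - 1) = t"
      using assms by auto
    ultimately have "fst p (t - 1) < 2^l"
      by (auto simp: cube_idx_def)
    moreover have "X t (fst x) \<in> dyadic l (fst p (t - 1))" if "x \<in> cell 0 l p" for x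
    proof -
      have "\<forall>r<j. X (1 + r) (fst x) \<in> dyadic l (fst p r)"
        using that by (simp add: cell_def cube_event_def mem_Times_iff del: One_nat_def)
      then show ?thesis
        using r t by metis
    qed
    ultimately show "\<exists>i<2^l. \<forall>x\<in>cell 0 l p. X t (fst x) \<in> dyadic l i"
      by blast
  qed
  then show ?thesis
    by (auto simp: cell_algebra_def)
qed

lemma future_slab_in_cell_algebra:
  assumes "j + m \<le> t"
  shows "dyadic_slab (\<lambda>x. X t (snd x)) l P \<in> cell_algebra"
proof -
  have "saturated t l (dyadic_slab (\<lambda>x. X t (snd x)) l P)"
  proof (rule saturated_dyadic_slab)
    fix p assume "p \<in> cell_idx t l"
    then have "snd p \<in> cube_idx (block_len t) l"
      by (auto simp: cell_idx_def)
    moreover have r: "t - (j + m) < block_len t" and t: "j + m + (t - (j + m)) = t"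
      using assms by (auto simp: block_len_def)
    ultimately have "snd p (t - (j + m)) < 2^l"
      by (auto simp: cube_idx_def)
    moreover have "X t (snd x) \<in> dyadic l (snd p (t - (j + m)))" if "x \<in> cell t l p" for x
    proof -
      have "\<forall>r<block_len t. X (j + m + r) (snd x) \<in> dyadic l (snd p r)"
        using that by (simp add: cell_def cube_event_def mem_Times_iff)
      then show ?thesis
        using r t by metis
    qed
    ultimately show "\<exists>i<2^l. \<forall>x\<in>cell t l p. X t (snd x) \<in> dyadic l i"
      by blast
  qed
  then show ?thesis
    by (auto simp: cell_algebra_def)
qed

lemma borel_measurable_cell_algebra:
  assumes slab: "\<And>l P. dyadic_slab f l P \<in> cell_algebra"
    and range: "\<And>x. x \<in> space Omega \<times> space Omega \<Longrightarrow> 0 \<le> f x \<and> f x \<le> 1"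
  shows "f \<in> borel_measurable (sigma (space Omega \<times> space Omega) cell_algebra)"
proof (rule borel_measurableI_le)
  fix a :: real
  have "{x \<in> space Omega \<times> space Omega. f x \<le> a}
      = (\<Inter>l. dyadic_slab f l (\<lambda>i. real i / 2^l \<le> a))"
  proof -
    have "f x \<le> a \<longleftrightarrow> (\<forall>l. \<exists>i<2^l. real i / 2^l \<le> a \<and> f x \<in> dyadic l i)"
      if "x \<in> space Omega \<times> space Omega" for x
      using range[OF that] by (intro le_iff_dyadic) auto
    then show ?thesis
      unfolding dyadic_slab_def by (intro set_eqI) (simp; blast)
  qed
  also have "\<dots> \<in> sigma_sets (space Omega \<times> space Omega) cell_algebra"
    using slab cell_algebra_subset_Pow by (intro sigma_sets_Inter sigma_sets.Basic)
  finally show "{x \<in> space (sigma (space Omega \<times> space Omega) cell_algebra). f x \<le> a}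
      \<in> sets (sigma (space Omega \<times> space Omega) cell_algebra)"
    using cell_algebra_subset_Pow by simp
qed

lemma space_sigma_cell_algebra:
  "space (sigma (space Omega \<times> space Omega) cell_algebra) = space Omega \<times> space Omega"
  using cell_algebra_subset_Pow by (rule space_measure_of)

lemma measurable_id_cell_algebra:
  "(\<lambda>x. x) \<in> sigma (space Omega \<times> space Omega) cell_algebra \<rightarrow>\<^sub>M restr_prod"
  unfolding restr_prod_def measurable_pair_iff o_def
proof
  show "fst \<in> sigma (space Omega \<times> space Omega) cell_algebra \<rightarrow>\<^sub>M restr \<mu> past"
  proof (rule measurable_gen_sigma)
    show "sets (restr \<mu> past) = gen_sigma {1..j}" "space (restr \<mu> past) = space Omega"
      using sets_restr_U space_restr_U by (simp_all add: past_def space_\<mu>)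
    show "(\<lambda>x. X t (fst x)) \<in> borel_measurable (sigma (space Omega \<times> space Omega) cell_algebra)"
      if "t \<in> {1..j}" for t
      using that X_bounds
      by (intro borel_measurable_cell_algebra past_slab_in_cell_algebra)
        (auto simp: mem_Times_iff)
  qed (simp add: space_sigma_cell_algebra mem_Times_iff Pi_iff)
  show "snd \<in> sigma (space Omega \<times> space Omega) cell_algebra \<rightarrow>\<^sub>M restr \<mu> future"
  proof (rule measurable_gen_sigma)
    show "sets (restr \<mu> future) = gen_sigma {j+m..}" "space (restr \<mu> future) = space Omega"
      using sets_restr_V space_restr_V by (simp_all add: future_def space_\<mu>)
    show "(\<lambda>x. X t (snd x)) \<in> borel_measurable (sigma (space Omega \<times> space Omega) cell_algebra)"
      if "t \<in> {j+m..}" for t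
      using that X_bounds
      by (intro borel_measurable_cell_algebra future_slab_in_cell_algebra)
        (auto simp: mem_Times_iff)
  qed (simp add: space_sigma_cell_algebra mem_Times_iff Pi_iff)
qed

lemma sets_restr_prod_eq: "sets restr_prod = sigma_sets (space restr_prod) cell_algebra"
proof
  show "sets restr_prod \<subseteq> sigma_sets (space restr_prod) cell_algebra"
  proof
    fix W assume "W \<in> sets restr_prod"
    then have "W \<subseteq> space Omega \<times> space Omega"
      using sets.sets_into_space[of W restr_prod] by (simp add: space_restr_prod space_\<mu>)
    then have "W = (\<lambda>x. x) -` W \<inter> space (sigma (space Omega \<times> space Omega) cell_algebra)"
      unfolding space_sigma_cell_algebra by blast
    also have "\<dots> \<in> sets (sigma (space Omega \<times> space Omega) cell_algebra)"
      using measurable_id_cell_algebra \<open>W \<in> sets restr_prod\<close> by (rule measurable_sets)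
    finally show "W \<in> sigma_sets (space restr_prod) cell_algebra"
      using sets_measure_of[OF cell_algebra_subset_Pow] by (simp add: space_restr_prod space_\<mu>)
  qed
  show "sigma_sets (space restr_prod) cell_algebra \<subseteq> sets restr_prod"
    using saturated_in_sets by (intro sets.sigma_sets_subset) (auto simp: cell_algebra_def)
qed

lemma beta_alg_blocks_le_1: "beta_alg \<mu> (gen_sigma {1..j}) (gen_sigma {j+m..}) \<le> 1"
  using beta_alg_le_1 unfolding beta_alg_past_future .

lemma discrepancy_approx_saturated:
  assumes "W \<in> sets restr_prod" "0 < e"
  obtains n l W' where "saturated n l W'" "\<bar>discrepancy W - discrepancy W'\<bar> < e"
proof -
  obtain W' where "W' \<in> cell_algebra"
    and W'_restr_prod: "measure restr_prod (sym_diff W W') < e / 2"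
    and W'_diag: "measure diag (sym_diff W W') < e / 2"
  proof -
    have "algebra (space restr_prod) cell_algebra"
      using algebra_cell_algebra by (simp add: space_restr_prod space_\<mu>)
    then have "approx_in restr_prod diag cell_algebra W"
      using assms(1) prob_space_restr_prod prob_space_diag sets_diag sets_restr_prod_eq
      by (intro approx_in_sigma_sets) (auto intro: prob_space.finite_measure)
    then show ?thesis
      using that \<open>0 < e\<close> unfolding approx_in_def by (meson half_gt_zero)
  qed
  then obtain n l where "saturated n l W'"
    by (auto simp: cell_algebra_def)
  moreover have "\<bar>discrepancy W - discrepancy W'\<bar> < e"
    using abs_discrepancy_diff_le[OF assms(1) saturated_in_sets[OF \<open>saturated n l W'\<close>]]
      W'_restr_prod W'_diag by linarith
  ultimately show ?thesis
    using that by blast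
qed

lemma tendsto_beta_nlj:
  "((\<lambda>(n, l). beta_nlj \<mu> n l m j) \<longlongrightarrow> beta_alg \<mu> (gen_sigma {1..j}) (gen_sigma {j+m..}))
    (sequentially \<times>\<^sub>F sequentially)"
  unfolding beta_alg_past_future[symmetric]
proof (rule order_tendstoI)
  fix a assume "beta_alg \<mu> past future < a"
  then show "\<forall>\<^sub>F x in sequentially \<times>\<^sub>F sequentially. (\<lambda>(n, l). beta_nlj \<mu> n l m j) x < a"
    using beta_nlj_le_beta_alg unfolding beta_alg_past_future[symmetric]
    by (intro always_eventually) (auto intro: le_less_trans)
next
  fix a assume "a < beta_alg \<mu> past future"
  then obtain W where W: "W \<in> sets restr_prod" "a < \<bar>discrepancy W\<bar>"
    by (rule less_beta_alg_imp_ex_discrepancy)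
  moreover have "0 < \<bar>discrepancy W\<bar> - a"
    using W(2) by simp
  ultimately obtain n0 l0 W' where W': "saturated n0 l0 W'"
    and close: "\<bar>discrepancy W - discrepancy W'\<bar> < \<bar>discrepancy W\<bar> - a"
    by (blast elim: discrepancy_approx_saturated)
  have "a < beta_nlj \<mu> n l m j" if "n0 \<le> n" "l0 \<le> l" for n l
  proof -
    have "\<bar>discrepancy W'\<bar> \<le> beta_nlj \<mu> n l m j"
      using saturated_mono[OF W' that] by (rule abs_discrepancy_saturated_le)
    moreover have "\<bar>discrepancy W\<bar> - \<bar>discrepancy W'\<bar> \<le> \<bar>discrepancy W - discrepancy W'\<bar>"
      by (rule abs_triangle_ineq2)
    ultimately show ?thesis
      using close by linarith
  qed
  then show "\<forall>\<^sub>F x in sequentially \<times>\<^sub>F sequentially. a < (\<lambda>(n, l). beta_nlj \<mu> n l m j) x"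
    unfolding eventually_prod_sequentially by (intro exI[of _ "max n0 l0"]) auto
qed

end

section \<open>Convergence of the dyadic coefficients\<close>

lemma bdd_above_beta_alg_blocks:
  assumes "prob_space \<mu>" "sets \<mu> = sets Omega"
  shows "bdd_above ((\<lambda>j. beta_alg \<mu> (gen_sigma {1..j}) (gen_sigma {j+m..})) ` {1..})"
  using dyadic_blocks.beta_alg_blocks_le_1[OF dyadic_blocks.intro[OF assms]]
  by (intro bdd_aboveI[of _ 1]) auto

lemma beta_nlj_le_beta_mix:
  assumes "prob_space \<mu>" "sets \<mu> = sets Omega" "1 \<le> j"
  shows "beta_nlj \<mu> n l m j \<le> beta_mix \<mu> m"
  unfolding beta_mix_def
  using assms(3) dyadic_blocks.beta_nlj_le_beta_alg[OF dyadic_blocks.intro[OF assms(1,2)]]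
  by (intro cSUP_upper2[OF bdd_above_beta_alg_blocks[OF assms(1,2)]]) auto

lemma beta_nlj_le_beta_nl: "j \<in> {1..n - m} \<Longrightarrow> beta_nlj \<mu> n l m j \<le> beta_nl \<mu> n l m"
  unfolding beta_nl_def by (intro Max_ge) auto

lemma beta_nl_le_beta_mix:
  assumes "prob_space \<mu>" "sets \<mu> = sets Omega" "m < n"
  shows "beta_nl \<mu> n l m \<le> beta_mix \<mu> m"
  unfolding beta_nl_def using assms beta_nlj_le_beta_mix by (intro Max.boundedI) auto

theorem proposition3:
  fixes \<mu> :: "(nat \<Rightarrow> real) measure" and m :: nat
  assumes "prob_space \<mu>"
    and "sets \<mu> = sets Omega"
    and "stationary \<mu>"
    and "ergodic \<mu>"
    and "m \<ge> 1"
  shows "((\<lambda>(n, l). beta_nl \<mu> n l m) \<longlongrightarrow> beta_mix \<mu> m) (sequentially \<times>\<^sub>F sequentially)"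
proof (rule order_tendstoI)
  fix a assume "beta_mix \<mu> m < a"
  then have "beta_nl \<mu> n l m < a" if "m < n" for n l
    using beta_nl_le_beta_mix[OF assms(1,2) that, of l] by linarith
  then show "\<forall>\<^sub>F x in sequentially \<times>\<^sub>F sequentially. (\<lambda>(n, l). beta_nl \<mu> n l m) x < a"
    unfolding eventually_prod_sequentially by (intro exI[of _ "Suc m"]) auto
next
  fix a assume "a < beta_mix \<mu> m"
  then obtain j where "1 \<le> j" "a < beta_alg \<mu> (gen_sigma {1..j}) (gen_sigma {j+m..})"
    unfolding beta_mix_def
    using less_cSUP_iff[OF _ bdd_above_beta_alg_blocks[OF assms(1,2)]] by auto
  moreover have "((\<lambda>(n, l). beta_nlj \<mu> n l m j)
      \<longlongrightarrow> beta_alg \<mu> (gen_sigma {1..j}) (gen_sigma {j+m..})) (sequentially \<times>\<^sub>F sequentially)"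
    using assms(1,2) by (intro dyadic_blocks.tendsto_beta_nlj dyadic_blocks.intro)
  ultimately have "\<forall>\<^sub>F (n, l) in sequentially \<times>\<^sub>F sequentially. a < beta_nlj \<mu> n l m j"
    by (simp add: case_prod_beta' order_tendstoD(1))
  moreover have "\<forall>\<^sub>F (n, l) in sequentially \<times>\<^sub>F sequentially. beta_nlj \<mu> n l m j \<le> beta_nl \<mu> n l m"
    unfolding eventually_prod_sequentially using \<open>1 \<le> j\<close>
    by (intro exI[of _ "j + m"]) (auto intro: beta_nlj_le_beta_nl)
  ultimately show "\<forall>\<^sub>F x in sequentially \<times>\<^sub>F sequentially. a < (\<lambda>(n, l). beta_nl \<mu> n l m) x"
    by eventually_elim auto
qed

end
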